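(* Let $\psi(\bm{x},\bm{y})$ be a quantifier-free Presburger formula where $\bm{x}$ is a vector of $n$ variables and $\bm{y}$ a vector of $m$ variables, and let $\varphi$ be the sentence $\forall\bm{x}\,\exists\bm{y}\colon\psi(\bm{x},\bm{y})$. Let $\kappa(\bm{x},z_1,z_2)$ be the existential formula $\exists\bm{y}\colon\psi(\bm{x},\bm{y})\vee z_1=z_2$, with free variables $\bm{x},z_1,z_2$. Then $\kappa$ is monadically decomposable if and only if $\varphi$ is true.
   Context: Presburger formulas are over $\langle\mathbb{Z};+,<,(\equiv_m)_m,0,1\rangle$ with atoms $\sum a_ix_i\le b$ and $\sum a_ix_i\equiv b\pmod m$; quantifier-free formulas are Boolean combinations of atoms. A Presburger formula is monadic if each of its atoms contains at most one variable; a formula is monadically decomposable if it is equivalent over $\mathbb{Z}$ to a monadic Presburger formula. *)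

theory Defs
  imports Main "HOL-Number_Theory.Cong"
begin

text \<open>Variables are natural numbers; an assignment is a map nat => int.
  A linear term sum a_i x_i is given by its coefficient list a (coefficient a!i for variable i).\<close>

type_synonym assignment = "nat \<Rightarrow> int"

definition lin :: "int list \<Rightarrow> assignment \<Rightarrow> int" where
  "lin a v = (\<Sum>i<length a. a ! i * v i)"

datatype atom =
    Le "int list" int
  | Cong "int list" int nat

fun atom_vars :: "atom \<Rightarrow> nat set" where
  "atom_vars (Le a b) = {i. i < length a \<and> a ! i \<noteq> 0}"
| "atom_vars (Cong a b m) = {i. i < length a \<and> a ! i \<noteq> 0}"

fun atom_eval :: "atom \<Rightarrow> assignment \<Rightarrow> bool" where
  "atom_eval (Le a b) v = (lin a v \<le> b)"
| "atom_eval (Cong a b m) v = [lin a v = b] (mod int m)"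

datatype pform =
    TT | FF
  | Atom atom
  | Neg pform
  | Conj pform pform
  | Disj pform pform
  | Exi nat pform
  | All nat pform

fun eval :: "pform \<Rightarrow> assignment \<Rightarrow> bool" where
  "eval TT v = True"
| "eval FF v = False"
| "eval (Atom a) v = atom_eval a v"
| "eval (Neg f) v = (\<not> eval f v)"
| "eval (Conj f g) v = (eval f v \<and> eval g v)"
| "eval (Disj f g) v = (eval f v \<or> eval g v)"
| "eval (Exi i f) v = (\<exists>k::int. eval f (v(i := k)))"
| "eval (All i f) v = (\<forall>k::int. eval f (v(i := k)))"

fun atoms :: "pform \<Rightarrow> atom set" where
  "atoms TT = {}"
| "atoms FF = {}"
| "atoms (Atom a) = {a}"
| "atoms (Neg f) = atoms f"
| "atoms (Conj f g) = atoms f \<union> atoms g"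
| "atoms (Disj f g) = atoms f \<union> atoms g"
| "atoms (Exi i f) = atoms f"
| "atoms (All i f) = atoms f"

fun free_vars :: "pform \<Rightarrow> nat set" where
  "free_vars TT = {}"
| "free_vars FF = {}"
| "free_vars (Atom a) = atom_vars a"
| "free_vars (Neg f) = free_vars f"
| "free_vars (Conj f g) = free_vars f \<union> free_vars g"
| "free_vars (Disj f g) = free_vars f \<union> free_vars g"
| "free_vars (Exi i f) = free_vars f - {i}"
| "free_vars (All i f) = free_vars f - {i}"

fun quantifier_free :: "pform \<Rightarrow> bool" where
  "quantifier_free (Neg f) = quantifier_free f"
| "quantifier_free (Conj f g) = (quantifier_free f \<and> quantifier_free g)"
| "quantifier_free (Disj f g) = (quantifier_free f \<and> quantifier_free g)"
| "quantifier_free (Exi i f) = False"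
| "quantifier_free (All i f) = False"
| "quantifier_free _ = True"

definition monadic :: "pform \<Rightarrow> bool" where
  "monadic f \<longleftrightarrow> quantifier_free f \<and> (\<forall>a\<in>atoms f. card (atom_vars a) \<le> 1)"

definition equivalent :: "pform \<Rightarrow> pform \<Rightarrow> bool" where
  "equivalent f g \<longleftrightarrow> (\<forall>v. eval f v = eval g v)"

definition monadically_decomposable :: "pform \<Rightarrow> bool" where
  "monadically_decomposable f \<longleftrightarrow> (\<exists>g. monadic g \<and> equivalent f g)"

definition true_sentence :: "pform \<Rightarrow> bool" where
  "true_sentence f \<longleftrightarrow> (\<forall>v. eval f v)"

definition Exis :: "nat list \<Rightarrow> pform \<Rightarrow> pform" where
  "Exis xs f = foldr Exi xs f"

definition Alls :: "nat list \<Rightarrow> pform \<Rightarrow> pform" where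
  "Alls xs f = foldr All xs f"

text \<open>The formula x_i = x_j, as the conjunction x_i - x_j <= 0 and x_j - x_i <= 0.\<close>
definition eq_form :: "nat \<Rightarrow> nat \<Rightarrow> pform" where
  "eq_form i j =
     (let N = Suc (max i j);
          c = (\<lambda>p q. map (\<lambda>k. if k = p then 1 else if k = q then -1 else 0) [0..<N])
      in Conj (Atom (Le (c i j) 0)) (Atom (Le (c j i) 0)))"

end

theory Submission
  imports Defs
begin

text \<open>Pulling the block \<open>\<exists>y\<close> into the first disjunct, \<open>\<kappa>\<close> is equivalent to
  \<open>\<chi> \<or> z\<^sub>1 = z\<^sub>2\<close> with \<open>\<chi> = \<exists>y. \<psi>\<close> not mentioning \<open>z\<^sub>1, z\<^sub>2\<close>. If \<open>\<chi>\<close> is valid this is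
  equivalent to \<open>TT\<close>. Otherwise fix a point where \<open>\<chi>\<close> fails; there the formula says exactly
  \<open>z\<^sub>1 = z\<^sub>2\<close>. A monadic formula cannot express this: its atoms mentioning \<open>z\<^sub>2\<close> mention
  nothing else, so as \<open>z\<^sub>2\<close> ranges over the infinite set \<open>\<int>\<close> they show only finitely many
  truth patterns, and two distinct values \<open>a \<noteq> b\<close> of \<open>z\<^sub>2\<close> are indistinguishable for the
  formula, whereas \<open>z\<^sub>1 = a\<close> separates them.\<close>

lemma lin_cong:
  "(\<And>i. i < length a \<Longrightarrow> a ! i \<noteq> 0 \<Longrightarrow> v i = w i) \<Longrightarrow> lin a v = lin a w"
  unfolding lin_def by (rule sum.cong) auto

lemma atom_eval_cong:
  "(\<And>i. i \<in> atom_vars at \<Longrightarrow> v i = w i) \<Longrightarrow> atom_eval at v = atom_eval at w"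
proof (cases at)
  case (Le a b)
  moreover assume "\<And>i. i \<in> atom_vars at \<Longrightarrow> v i = w i"
  ultimately have "lin a v = lin a w" by (intro lin_cong) auto
  with Le show ?thesis by simp
next
  case (Cong a b m)
  moreover assume "\<And>i. i \<in> atom_vars at \<Longrightarrow> v i = w i"
  ultimately have "lin a v = lin a w" by (intro lin_cong) auto
  with Cong show ?thesis by simp
qed

lemma eval_cong: "(\<And>i. i \<in> free_vars f \<Longrightarrow> v i = w i) \<Longrightarrow> eval f v = eval f w"
proof (induction f arbitrary: v w)
  case (Atom a)
  show ?case by (simp, rule atom_eval_cong) (simp add: Atom.prems)
next
  case (Neg f)
  have "eval f v = eval f w" by (rule Neg.IH) (simp add: Neg.prems)
  then show ?case by simp
next
  case (Conj f g)
  have "eval f v = eval f w" "eval g v = eval g w"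
    by (rule Conj.IH; simp add: Conj.prems)+
  then show ?case by simp
next
  case (Disj f g)
  have "eval f v = eval f w" "eval g v = eval g w"
    by (rule Disj.IH; simp add: Disj.prems)+
  then show ?case by simp
next
  case (Exi i f)
  have "eval f (v(i := k)) = eval f (w(i := k))" for k
    by (rule Exi.IH) (simp add: Exi.prems)
  then show ?case by simp
next
  case (All i f)
  have "eval f (v(i := k)) = eval f (w(i := k))" for k
    by (rule All.IH) (simp add: All.prems)
  then show ?case by simp
qed simp_all

lemma eval_atoms_cong:
  "quantifier_free g \<Longrightarrow> (\<And>at. at \<in> atoms g \<Longrightarrow> atom_eval at v = atom_eval at w) \<Longrightarrow>
    eval g v = eval g w"
  by (induction g) auto

lemma finite_atoms: "finite (atoms g)"
  by (induction g) auto

lemma finite_atom_vars: "finite (atom_vars at)"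
  by (cases at) auto

lemma eval_Exis:
  "eval (Exis ys f) v \<longleftrightarrow> (\<exists>u. (\<forall>i. i \<notin> set ys \<longrightarrow> u i = v i) \<and> eval f u)"
proof (induction ys arbitrary: v)
  case Nil
  then show ?case by (auto simp: Exis_def fun_eq_iff)
next
  case (Cons y ys)
  have "eval (Exis (y # ys) f) v \<longleftrightarrow> (\<exists>k. eval (Exis ys f) (v(y := k)))"
    by (simp add: Exis_def)
  also have "\<dots> \<longleftrightarrow> (\<exists>u. (\<forall>i. i \<notin> set (y # ys) \<longrightarrow> u i = v i) \<and> eval f u)"
  proof
    assume "\<exists>k. eval (Exis ys f) (v(y := k))"
    then obtain k u where "\<forall>i. i \<notin> set ys \<longrightarrow> u i = (v(y := k)) i" "eval f u"
      using Cons.IH by blast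
    then show "\<exists>u. (\<forall>i. i \<notin> set (y # ys) \<longrightarrow> u i = v i) \<and> eval f u"
      by (intro exI[of _ u]) auto
  next
    assume "\<exists>u. (\<forall>i. i \<notin> set (y # ys) \<longrightarrow> u i = v i) \<and> eval f u"
    then obtain u where u: "\<forall>i. i \<notin> set (y # ys) \<longrightarrow> u i = v i" "eval f u" by blast
    then have "eval (Exis ys f) (v(y := u y))"
      using Cons.IH by auto
    then show "\<exists>k. eval (Exis ys f) (v(y := k))" by blast
  qed
  finally show ?case .
qed

lemma free_vars_Exis: "free_vars (Exis ys f) = free_vars f - set ys"
  by (induction ys) (auto simp: Exis_def)

lemma eval_Exis_Disj:
  "eval (Exis ys (Disj f g)) v \<longleftrightarrow> eval (Exis ys f) v \<or> eval (Exis ys g) v"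
  unfolding eval_Exis by auto

lemma true_sentence_Alls_iff: "true_sentence (Alls xs f) \<longleftrightarrow> (\<forall>v. eval f v)"
  unfolding true_sentence_def
proof (induction xs)
  case Nil
  then show ?case by (simp add: Alls_def)
next
  case (Cons x xs)
  have "(\<forall>v. eval (Alls (x # xs) f) v) \<longleftrightarrow> (\<forall>v. eval (Alls xs f) v)"
    by (simp add: Alls_def) (metis fun_upd_triv)
  with Cons.IH show ?case by blast
qed

lemma eval_eq_form:
  assumes "i \<noteq> j"
  shows "eval (eq_form i j) v \<longleftrightarrow> v i = v j"
proof -
  have lin_diff: "lin (map (\<lambda>k. if k = p then 1 else if k = q then -1 else 0) [0..<N]) v = v p - v q"
    if "p < N" "q < N" "p \<noteq> q" for p q N
  proof -
    have "lin (map (\<lambda>k. if k = p then 1 else if k = q then -1 else 0) [0..<N]) v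
       = (\<Sum>k<N. (if k = p then v k else 0) + (if k = q then - v k else 0))"
      unfolding lin_def by (rule sum.cong) (use that in auto)
    also have "\<dots> = v p - v q" using that by (simp add: sum.distrib)
    finally show ?thesis .
  qed
  define N where "N = Suc (max i j)"
  have ij: "i < N" "j < N" by (auto simp: N_def)
  have "eval (eq_form i j) v \<longleftrightarrow>
    lin (map (\<lambda>k. if k = i then 1 else if k = j then -1 else 0) [0..<N]) v \<le> 0 \<and>
    lin (map (\<lambda>k. if k = j then 1 else if k = i then -1 else 0) [0..<N]) v \<le> 0"
    by (simp only: eq_form_def Let_def N_def eval.simps atom_eval.simps)
  then show ?thesis
    unfolding lin_diff[OF ij assms] lin_diff[OF ij(2,1) assms[symmetric]] by linarith
qed

lemma eval_Exis_eq_form: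
  assumes "i \<noteq> j" "i \<notin> set ys" "j \<notin> set ys"
  shows "eval (Exis ys (eq_form i j)) v \<longleftrightarrow> v i = v j"
  using assms by (auto simp: eval_Exis eval_eq_form)

lemma monadic_indistinguishable_values:
  assumes "monadic g"
  obtains a b :: int where "a \<noteq> b" and "\<And>w. eval g (w(j := a)) = eval g (w(j := b))"
proof -
  define pattern where
    "pattern c = {at \<in> atoms g. atom_eval at ((\<lambda>_. 0)(j := c))}" for c :: int
  have "finite (range pattern)"
    by (rule finite_subset[of _ "Pow (atoms g)"]) (auto simp: pattern_def finite_atoms)
  then have "\<not> inj pattern"
    using finite_imageD infinite_UNIV_int by blast
  then obtain a b where "a \<noteq> b" and same_pattern: "pattern a = pattern b"
    unfolding inj_def by blast
  have atoms_agree: "atom_eval at (w(j := a)) = atom_eval at (w(j := b))"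
    if at: "at \<in> atoms g" for w at
  proof (cases "j \<in> atom_vars at")
    case False
    then show ?thesis by (intro atom_eval_cong) auto
  next
    case True
    have "card (atom_vars at) \<le> 1"
      using assms at unfolding monadic_def by blast
    then have "atom_vars at = {j}"
      using True card_le_Suc0_iff_eq[OF finite_atom_vars] by auto
    then have "atom_eval at (w(j := c)) = atom_eval at ((\<lambda>_. 0)(j := c))" for c
      by (intro atom_eval_cong) auto
    moreover have "atom_eval at ((\<lambda>_. 0)(j := a)) = atom_eval at ((\<lambda>_. 0)(j := b))"
      using same_pattern at unfolding pattern_def by blast
    ultimately show ?thesis by simp
  qed
  have "quantifier_free g"
    using assms by (simp add: monadic_def)
  then have "eval g (w(j := a)) = eval g (w(j := b))" for w
    by (rule eval_atoms_cong) (rule atoms_agree)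
  with \<open>a \<noteq> b\<close> show thesis by (rule that)
qed

lemma monadically_decomposable_cong:
  "equivalent f f' \<Longrightarrow> monadically_decomposable f \<longleftrightarrow> monadically_decomposable f'"
  by (auto simp: monadically_decomposable_def equivalent_def)

lemma monadically_decomposable_Disj_eq_form_iff:
  assumes "i \<noteq> j" "i \<notin> free_vars f" "j \<notin> free_vars f"
  shows "monadically_decomposable (Disj f (eq_form i j)) \<longleftrightarrow> (\<forall>v. eval f v)"
proof
  assume "monadically_decomposable (Disj f (eq_form i j))"
  then obtain g where "monadic g" and g: "\<And>v. eval g v \<longleftrightarrow> eval f v \<or> v i = v j"
    using assms(1) by (auto simp: monadically_decomposable_def equivalent_def eval_eq_form)
  show "\<forall>v. eval f v"
  proof (rule ccontr)
    assume "\<not> (\<forall>v. eval f v)"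
    then obtain u where u: "\<not> eval f u" by blast
    obtain a b where "a \<noteq> b" and ab: "\<And>w. eval g (w(j := a)) = eval g (w(j := b))"
      using monadic_indistinguishable_values[OF \<open>monadic g\<close>] by blast
    have "eval f (u(i := a, j := b)) = eval f u"
      using assms by (intro eval_cong) auto
    then have "\<not> eval g (u(i := a, j := b))"
      using g u \<open>a \<noteq> b\<close> assms(1) by simp
    moreover have "eval g (u(i := a, j := a))"
      using g assms(1) by simp
    ultimately show False
      using ab[of "u(i := a)"] by simp
  qed
next
  assume "\<forall>v. eval f v"
  then have "equivalent (Disj f (eq_form i j)) TT"
    by (simp add: equivalent_def)
  moreover have "monadic TT"
    by (simp add: monadic_def)
  ultimately show "monadically_decomposable (Disj f (eq_form i j))"
    unfolding monadically_decomposable_def by blast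
qed

theorem mainTheorem13:
  fixes n m :: nat and \<psi> :: pform
  assumes "quantifier_free \<psi>"
    and "free_vars \<psi> \<subseteq> {..<n+m}"
  shows "monadically_decomposable
           (Exis [n..<n+m] (Disj \<psi> (eq_form (n+m) (n+m+1))))
         \<longleftrightarrow> true_sentence (Alls [0..<n] (Exis [n..<n+m] \<psi>))"
proof -
  let ?\<kappa> = "Exis [n..<n+m] (Disj \<psi> (eq_form (n+m) (n+m+1)))"
  let ?\<chi> = "Exis [n..<n+m] \<psi>"
  have "equivalent ?\<kappa> (Disj ?\<chi> (eq_form (n+m) (n+m+1)))"
    by (simp add: equivalent_def eval_Exis_Disj eval_Exis_eq_form eval_eq_form)
  moreover have "n+m \<notin> free_vars ?\<chi>" "n+m+1 \<notin> free_vars ?\<chi>"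
    using assms(2) by (auto simp: free_vars_Exis)
  ultimately show ?thesis
    by (simp add: monadically_decomposable_cong monadically_decomposable_Disj_eq_form_iff
        true_sentence_Alls_iff)
qed

end
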